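(* Let $R>0$ and let $\mathbf L\colon\mathbb R^n\times\mathbb R^m\to\mathbb R$ be an $R$-smooth convex-concave function with a saddle point $\mathbf z^\star$. Let $\alpha_0=\frac{0.618}{R}$, $\alpha_{k+1}=\alpha_k\left(1-\frac{1}{(k+1)(k+3)}\frac{\alpha_k^2R^2}{1-\alpha_k^2R^2}\right)$ for $k\ge0$, let $\mathbf z^0\in\mathbb R^n\times\mathbb R^m$, and define $$\mathbf z^{k+1/2}=\mathbf z^k+\tfrac{1}{k+2}(\mathbf z^0-\mathbf z^k)-\alpha_k\mathbf G(\mathbf z^k),\qquad \mathbf z^{k+1}=\mathbf z^k+\tfrac{1}{k+2}(\mathbf z^0-\mathbf z^k)-\alpha_k\mathbf G(\mathbf z^{k+1/2}),\quad k\ge0.$$ Then for all $k\ge0$, $$\|\nabla\mathbf L(\mathbf z^k)\|^2\le\frac{27R^2\|\mathbf z^0-\mathbf z^\star\|^2}{(k+1)(k+2)}.$$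
   Context: Write $\mathbf z=(\mathbf x,\mathbf y)$. $\mathbf L$ convex-concave: convex in $\mathbf x$ for fixed $\mathbf y$, concave in $\mathbf y$ for fixed $\mathbf x$. A saddle point $(\mathbf x^\star,\mathbf y^\star)$ satisfies $\mathbf L(\mathbf x^\star,\mathbf y)\le\mathbf L(\mathbf x^\star,\mathbf y^\star)\le\mathbf L(\mathbf x,\mathbf y^\star)$ for all $\mathbf x,\mathbf y$. $\mathbf G(\mathbf z)=(\nabla_{\mathbf x}\mathbf L(\mathbf x,\mathbf y),-\nabla_{\mathbf y}\mathbf L(\mathbf x,\mathbf y))$; $\mathbf L$ is $R$-smooth if it is differentiable and $\mathbf G$ is $R$-Lipschitz. *)

theory Defs
  imports "HOL-Analysis.Analysis"
begin

definition grad :: "('a::euclidean_space \<Rightarrow> real) \<Rightarrow> 'a \<Rightarrow> 'a" where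
  "grad f x = (THE g. (f has_derivative (\<lambda>h. g \<bullet> h)) (at x))"

definition grad_x :: "('a::euclidean_space \<times> 'b::euclidean_space \<Rightarrow> real) \<Rightarrow> 'a \<times> 'b \<Rightarrow> 'a" where
  "grad_x L z = grad (\<lambda>x. L (x, snd z)) (fst z)"

definition grad_y :: "('a::euclidean_space \<times> 'b::euclidean_space \<Rightarrow> real) \<Rightarrow> 'a \<times> 'b \<Rightarrow> 'b" where
  "grad_y L z = grad (\<lambda>y. L (fst z, y)) (snd z)"

definition saddle_op :: "('a::euclidean_space \<times> 'b::euclidean_space \<Rightarrow> real) \<Rightarrow> 'a \<times> 'b \<Rightarrow> 'a \<times> 'b" where
  "saddle_op L z = (grad_x L z, - grad_y L z)"

definition convex_concave :: "('a::euclidean_space \<times> 'b::euclidean_space \<Rightarrow> real) \<Rightarrow> bool" where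
  "convex_concave L \<longleftrightarrow> (\<forall>y. convex_on UNIV (\<lambda>x. L (x, y))) \<and> (\<forall>x. concave_on UNIV (\<lambda>y. L (x, y)))"

definition is_saddle_point :: "('a \<times> 'b \<Rightarrow> real) \<Rightarrow> 'a \<times> 'b \<Rightarrow> bool" where
  "is_saddle_point L zs \<longleftrightarrow>
     (\<forall>x y. L (fst zs, y) \<le> L zs \<and> L zs \<le> L (x, snd zs))"

definition smooth_cc :: "real \<Rightarrow> ('a::euclidean_space \<times> 'b::euclidean_space \<Rightarrow> real) \<Rightarrow> bool" where
  "smooth_cc R L \<longleftrightarrow> (\<forall>z. L differentiable (at z)) \<and> R-lipschitz_on UNIV (saddle_op L)"

end

theory Submission
  imports Defs
begin

text \<open>
  Write \<open>G = saddle_op L\<close>. Convexity-concavity makes \<open>G\<close> monotone (add up the four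
  first-order convexity and concavity inequalities at two points), and by Fermat's rule \<open>G\<close>
  vanishes at the saddle point \<open>z\<^sup>\<star>\<close>; moreover \<open>\<parallel>G z\<parallel> = \<parallel>\<nabla>L z\<parallel>\<close>. So it suffices to
  analyse the anchored extragradient iteration for a monotone \<open>R\<close>-Lipschitz operator.

  The potential \<open>V\<^sub>k = \<alpha>\<^sub>k (k+1)(k+2) \<parallel>G z\<^sub>k\<parallel>\<^sup>2 + 2(k+1) \<langle>G z\<^sub>k, z\<^sub>k - z\<^sub>0\<rangle>\<close> is nonincreasing:
  up to a positive factor, \<open>V\<^sub>k - V\<^sub>k\<^sub>+\<^sub>1\<close> is a nonnegative combination of the monotonicity
  inequality between \<open>z\<^sub>k\<close> and \<open>z\<^sub>k\<^sub>+\<^sub>1\<close>, the Lipschitz inequality between \<open>z\<^sub>k\<^sub>+\<^sub>1\<^sub>/\<^sub>2\<close> and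
  \<open>z\<^sub>k\<^sub>+\<^sub>1\<close>, and a square, and the step-size recursion is exactly what cancels the remaining
  \<open>\<parallel>G z\<^sub>k\<^sub>+\<^sub>1\<parallel>\<^sup>2\<close> term. Since \<open>\<langle>G z\<^sub>k, z\<^sub>k - z\<^sup>\<star>\<rangle> \<ge> 0\<close>, the potential is at least
  \<open>\<alpha>\<^sub>k (k+1)(k+2) \<parallel>G z\<^sub>k\<parallel>\<^sup>2 - 2(k+1) \<parallel>G z\<^sub>k\<parallel> \<parallel>z\<^sub>0 - z\<^sup>\<star>\<parallel>\<close>, while
  \<open>V\<^sub>0 \<le> 2 \<alpha>\<^sub>0 R\<^sup>2 \<parallel>z\<^sub>0 - z\<^sup>\<star>\<parallel>\<^sup>2\<close>. A numerical enclosure of the step sizes gives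
  \<open>0.435 \<le> \<alpha>\<^sub>k R \<le> 0.618\<close>, and solving the resulting quadratic inequality for \<open>\<parallel>G z\<^sub>k\<parallel>\<close>
  yields the constant 27.
\<close>

lemma grad_eqI:
  fixes f :: "'a::euclidean_space \<Rightarrow> real"
  assumes "(f has_derivative (\<lambda>h. g \<bullet> h)) (at x)"
  shows "grad f x = g"
  unfolding grad_def
proof (rule the_equality)
  fix g' assume "(f has_derivative (\<lambda>h. g' \<bullet> h)) (at x)"
  then have "(\<lambda>h. g' \<bullet> h) = (\<lambda>h. g \<bullet> h)" using assms by (rule has_derivative_unique)
  then show "g' = g" by (metis vector_eq_rdot)
qed fact

lemma has_derivative_grad:
  fixes f :: "'a::euclidean_space \<Rightarrow> real"
  assumes "f differentiable (at x)"
  shows "(f has_derivative (\<lambda>h. grad f x \<bullet> h)) (at x)"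
proof -
  obtain D where D: "(f has_derivative D) (at x)" using assms unfolding differentiable_def by blast
  have "D = (\<lambda>h. adjoint D 1 \<bullet> h)"
    using adjoint_works[OF has_derivative_linear[OF D]] by (simp add: fun_eq_iff inner_commute)
  with D show ?thesis using grad_eqI by metis
qed

lemma has_derivative_partial_fst:
  fixes f :: "'a::real_inner \<times> 'b::real_inner \<Rightarrow> real"
  assumes "(f has_derivative (\<lambda>h. g \<bullet> h)) (at z)"
  shows "((\<lambda>x. f (x, snd z)) has_derivative (\<lambda>h. fst g \<bullet> h)) (at (fst z))"
proof -
  have "((\<lambda>x. (x, snd z)) has_derivative (\<lambda>h. (h, 0))) (at (fst z))"
    by (auto intro!: derivative_eq_intros)
  moreover have "(f has_derivative (\<lambda>h. g \<bullet> h)) (at (fst z, snd z))"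
    using assms by simp
  ultimately show ?thesis
    using has_derivative_compose by (fastforce simp: inner_Pair_0)
qed

lemma has_derivative_partial_snd:
  fixes f :: "'a::real_inner \<times> 'b::real_inner \<Rightarrow> real"
  assumes "(f has_derivative (\<lambda>h. g \<bullet> h)) (at z)"
  shows "((\<lambda>y. f (fst z, y)) has_derivative (\<lambda>h. snd g \<bullet> h)) (at (snd z))"
proof -
  have "((\<lambda>y. (fst z, y)) has_derivative (\<lambda>h. (0, h))) (at (snd z))"
    by (auto intro!: derivative_eq_intros)
  moreover have "(f has_derivative (\<lambda>h. g \<bullet> h)) (at (fst z, snd z))"
    using assms by simp
  ultimately show ?thesis
    using has_derivative_compose by (fastforce simp: inner_Pair_0)
qed

lemma grad_x_eq_fst_grad:
  assumes "L differentiable (at z)"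
  shows "grad_x L z = fst (grad L z)"
  unfolding grad_x_def by (rule grad_eqI, rule has_derivative_partial_fst, rule has_derivative_grad[OF assms])

lemma grad_y_eq_snd_grad:
  assumes "L differentiable (at z)"
  shows "grad_y L z = snd (grad L z)"
  unfolding grad_y_def by (rule grad_eqI, rule has_derivative_partial_snd, rule has_derivative_grad[OF assms])

lemma has_derivative_grad_x:
  assumes "L differentiable (at z)"
  shows "((\<lambda>x. L (x, snd z)) has_derivative (\<lambda>h. grad_x L z \<bullet> h)) (at (fst z))"
  unfolding grad_x_eq_fst_grad[OF assms] by (rule has_derivative_partial_fst, rule has_derivative_grad[OF assms])

lemma has_derivative_grad_y:
  assumes "L differentiable (at z)"
  shows "((\<lambda>y. L (fst z, y)) has_derivative (\<lambda>h. grad_y L z \<bullet> h)) (at (snd z))"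
  unfolding grad_y_eq_snd_grad[OF assms] by (rule has_derivative_partial_snd, rule has_derivative_grad[OF assms])

lemma norm_saddle_op:
  assumes "L differentiable (at z)"
  shows "norm (saddle_op L z) = norm (grad L z)"
  unfolding saddle_op_def grad_x_eq_fst_grad[OF assms] grad_y_eq_snd_grad[OF assms]
  by (metis norm_Pair norm_minus_cancel prod.collapse)

lemma convex_on_above_tangent:
  fixes f :: "'a::real_normed_vector \<Rightarrow> real"
  assumes convex: "convex_on UNIV f" and deriv: "(f has_derivative f') (at x)"
  shows "f x + f' (y - x) \<le> f y"
proof -
  define \<phi> where "\<phi> t = f (x + t *\<^sub>R (y - x))" for t :: real
  have "convex_on UNIV \<phi>"
  proof (rule convex_onI)
    fix t s u :: real assume "0 < t" "t < 1"
    have "x + ((1 - t) *\<^sub>R s + t *\<^sub>R u) *\<^sub>R (y - x)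
        = (1 - t) *\<^sub>R (x + s *\<^sub>R (y - x)) + t *\<^sub>R (x + u *\<^sub>R (y - x))"
      by (simp add: algebra_simps)
    then show "\<phi> ((1 - t) *\<^sub>R s + t *\<^sub>R u) \<le> (1 - t) * \<phi> s + t * \<phi> u"
      unfolding \<phi>_def using convex_onD[OF convex, of t] \<open>0 < t\<close> \<open>t < 1\<close> by simp
  qed simp
  moreover have "(\<phi> has_field_derivative f' (y - x)) (at 0)"
  proof -
    have "((\<lambda>t::real. x + t *\<^sub>R (y - x)) has_derivative (\<lambda>t. t *\<^sub>R (y - x))) (at 0)"
      by (auto intro!: derivative_eq_intros)
    from has_derivative_compose[OF this] deriv
    have "(\<phi> has_derivative (\<lambda>t. f' (t *\<^sub>R (y - x)))) (at 0)"
      unfolding \<phi>_def by simp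
    then show ?thesis
      using linear_scale[OF has_derivative_linear[OF deriv]]
      by (simp add: has_field_derivative_def mult_commute_abs)
  qed
  ultimately have "f' (y - x) * (1 - 0) \<le> \<phi> 1 - \<phi> 0"
    by (intro convex_on_imp_above_tangent) auto
  then show ?thesis unfolding \<phi>_def by simp
qed

lemma concave_on_below_tangent:
  fixes f :: "'a::real_normed_vector \<Rightarrow> real"
  assumes "concave_on UNIV f" and "(f has_derivative f') (at x)"
  shows "f y \<le> f x + f' (y - x)"
  using convex_on_above_tangent[of "\<lambda>x. - f x" "\<lambda>h. - f' h" x y] assms
  by (simp add: concave_on_def has_derivative_minus)

lemma saddle_op_monotone:
  assumes cc: "convex_concave L" and diff: "\<And>z. L differentiable (at z)"
  shows "0 \<le> (saddle_op L z - saddle_op L z') \<bullet> (z - z')"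
proof -
  obtain x y x' y' where z: "z = (x, y)" and z': "z' = (x', y')" by fastforce
  have convex: "convex_on UNIV (\<lambda>x. L (x, y))" for y
    using cc unfolding convex_concave_def by blast
  have concave: "concave_on UNIV (\<lambda>y. L (x, y))" for x
    using cc unfolding convex_concave_def by blast
  have "L (x, y) + grad_x L z \<bullet> (x' - x) \<le> L (x', y)"
    using convex_on_above_tangent[OF convex has_derivative_grad_x[OF diff[of z]], of x'] by (simp add: z)
  moreover have "L (x', y') + grad_x L z' \<bullet> (x - x') \<le> L (x, y')"
    using convex_on_above_tangent[OF convex has_derivative_grad_x[OF diff[of z']], of x] by (simp add: z')
  moreover have "L (x, y') \<le> L (x, y) + grad_y L z \<bullet> (y' - y)"
    using concave_on_below_tangent[OF concave has_derivative_grad_y[OF diff[of z]], of y'] by (simp add: z)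
  moreover have "L (x', y) \<le> L (x', y') + grad_y L z' \<bullet> (y - y')"
    using concave_on_below_tangent[OF concave has_derivative_grad_y[OF diff[of z']], of y] by (simp add: z')
  moreover have "(saddle_op L z - saddle_op L z') \<bullet> (z - z')
      = - (grad_x L z \<bullet> (x' - x)) - grad_x L z' \<bullet> (x - x') + grad_y L z \<bullet> (y' - y) + grad_y L z' \<bullet> (y - y')"
    by (simp add: saddle_op_def z z' inner_diff_left inner_diff_right algebra_simps)
  ultimately show ?thesis by linarith
qed

lemma saddle_op_eq_0_at_saddle_point:
  assumes diff: "\<And>z. L differentiable (at z)" and saddle: "is_saddle_point L zs"
  shows "saddle_op L zs = 0"
proof -
  have "(\<lambda>h. grad_x L zs \<bullet> h) = (\<lambda>h. 0)"
    by (rule has_derivative_local_min[OF has_derivative_grad_x[OF diff]])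
      (use saddle in \<open>auto simp: is_saddle_point_def\<close>)
  moreover have "(\<lambda>h. grad_y L zs \<bullet> h) = (\<lambda>h. 0)"
    by (rule has_derivative_local_max[OF has_derivative_grad_y[OF diff]])
      (use saddle in \<open>auto simp: is_saddle_point_def\<close>)
  ultimately have "grad_x L zs = 0" and "grad_y L zs = 0"
    by (metis inner_eq_zero_iff)+
  then show ?thesis by (simp add: saddle_op_def zero_prod_def)
qed

lemma power2_div_one_minus_mono:
  fixes s t :: real
  assumes "0 \<le> s" "s \<le> t" "t < 1"
  shows "s^2 / (1 - s^2) \<le> t^2 / (1 - t^2)"
proof -
  have "s^2 \<le> t^2" and "t^2 < 1"
    using assms by (auto intro: power_mono simp: abs_square_less_1)
  then show ?thesis by (intro frac_le) auto
qed

lemma power2_div_one_minus_nonneg: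
  fixes t :: real
  assumes "\<bar>t\<bar> < 1"
  shows "0 \<le> t^2 / (1 - t^2)"
  using assms by (simp add: abs_square_less_1 less_imp_le)

lemma stepsize_update_enclosure:
  fixes l x u d :: real
  assumes "0 < l" "l \<le> x" "x \<le> u" "u < 1" "u^2 / (1 - u^2) \<le> d"
  shows "l * (1 - 1/d * (u^2 / (1 - u^2))) \<le> x * (1 - 1/d * (x^2 / (1 - x^2)))"
    and "x * (1 - 1/d * (x^2 / (1 - x^2))) \<le> u * (1 - 1/d * (l^2 / (1 - l^2)))"
proof -
  have gl: "0 \<le> l^2 / (1 - l^2)" using assms by (intro power2_div_one_minus_nonneg) auto
  have glx: "l^2 / (1 - l^2) \<le> x^2 / (1 - x^2)" and gxu: "x^2 / (1 - x^2) \<le> u^2 / (1 - u^2)"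
    using assms by (auto intro!: power2_div_one_minus_mono)
  have d: "0 \<le> d" using assms gl glx gxu by linarith
  have "1/d * (u^2 / (1 - u^2)) \<le> 1/d * d"
    using assms(5) d by (intro mult_left_mono) auto
  also have "\<dots> \<le> 1" by (cases "d = 0") simp_all
  finally have "1/d * (u^2 / (1 - u^2)) \<le> 1" .
  moreover have "1/d * (x^2 / (1 - x^2)) \<le> 1/d * (u^2 / (1 - u^2))"
    by (rule mult_left_mono[OF gxu]) (simp add: d)
  moreover have "1/d * (l^2 / (1 - l^2)) \<le> 1/d * (x^2 / (1 - x^2))"
    by (rule mult_left_mono[OF glx]) (simp add: d)
  ultimately show "l * (1 - 1/d * (u^2 / (1 - u^2))) \<le> x * (1 - 1/d * (x^2 / (1 - x^2)))"
    and "x * (1 - 1/d * (x^2 / (1 - x^2))) \<le> u * (1 - 1/d * (l^2 / (1 - l^2)))"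
    using assms by (auto intro!: mult_mono)
qed

lemma stepsize_update_lower_bound:
  fixes l x u c d p :: real
  assumes x: "l * (1 - p) \<le> x" "x \<le> u" and l: "0 < l" and p: "0 \<le> p" "p < 1"
    and u: "u < 1" "u^2 / (1 - u^2) \<le> c" and d: "c \<le> d" "0 < d"
  shows "l * (1 - (p + c / d)) \<le> x * (1 - 1 / d * (x^2 / (1 - x^2)))"
    and "x * (1 - 1 / d * (x^2 / (1 - x^2))) \<le> x"
proof -
  have "0 < l * (1 - p)" using l p by simp
  then have "0 < x" using x(1) by linarith
  then have g: "0 \<le> x^2 / (1 - x^2)" "x^2 / (1 - x^2) \<le> c"
    using x(2) u power2_div_one_minus_mono[of x u] power2_div_one_minus_nonneg[of x] by auto
  have "1 / d * (x^2 / (1 - x^2)) \<le> 1 / d * c"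
    using g d by (intro mult_left_mono) simp_all
  moreover have "0 \<le> 1 / d * (x^2 / (1 - x^2))" using g d by (intro mult_nonneg_nonneg) simp_all
  ultimately have "x * (1 - c / d) \<le> x * (1 - 1 / d * (x^2 / (1 - x^2)))"
    and "x * (1 - 1 / d * (x^2 / (1 - x^2))) \<le> x"
    using \<open>0 < x\<close> by (auto intro!: mult_left_mono)
  moreover have "l * (1 - p) * (1 - c / d) \<le> x * (1 - c / d)"
    using x(1) d by (simp add: mult_right_mono)
  moreover have "l * (1 - (p + c / d)) \<le> l * (1 - p) * (1 - c / d)"
  proof -
    have "0 \<le> l * p * (c / d)" using l p d u g by simp
    then show ?thesis by (simp add: algebra_simps)
  qed
  ultimately show "l * (1 - (p + c / d)) \<le> x * (1 - 1 / d * (x^2 / (1 - x^2)))"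
    and "x * (1 - 1 / d * (x^2 / (1 - x^2))) \<le> x"
    by linarith+
qed

text \<open>The bound \<open>1 / (2(K+1)) + 1 / (2(K+2))\<close> is the telescoping sum of
  \<open>1 / ((k+1)(k+3))\<close> over all \<open>k \<ge> K\<close>.\<close>

lemma stepsize_tail_enclosure:
  fixes a :: "nat \<Rightarrow> real" and K :: nat
  assumes rec: "\<And>k. K \<le> k \<Longrightarrow> a (Suc k) = a k * (1 - 1 / ((real k + 1) * (real k + 3)) * (a k ^ 2 / (1 - a k ^ 2)))"
    and l: "0 < l" "l \<le> a K" and u: "a K \<le> u" "u < 1" and c: "u^2 / (1 - u^2) \<le> c"
    and tail: "c * (1 / (2 * (real K + 1)) + 1 / (2 * (real K + 2))) < 1"
    and "K \<le> k"
  shows "l * (1 - c * (1 / (2 * (real K + 1)) + 1 / (2 * (real K + 2)))) \<le> a k \<and> a k \<le> u"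
proof -
  define S where "S = 1 / (2 * (real K + 1)) + 1 / (2 * (real K + 2))"
  define T where "T k = S - 1 / (2 * (real k + 1)) - 1 / (2 * (real k + 2))" for k
  have c0: "0 \<le> c" using c power2_div_one_minus_nonneg[of u] l u by linarith
  have T: "0 \<le> c * T k" "c * T k \<le> c * S" if "K \<le> k" for k
  proof -
    have "1 / (2 * (real k + 1)) \<le> 1 / (2 * (real K + 1))" "1 / (2 * (real k + 2)) \<le> 1 / (2 * (real K + 2))"
      using that by (simp_all add: frac_le)
    moreover have "0 \<le> 1 / (2 * (real k + 1))" "0 \<le> 1 / (2 * (real k + 2))" by simp_all
    ultimately have "0 \<le> T k" "T k \<le> S" unfolding T_def S_def by linarith+
    then show "0 \<le> c * T k" "c * T k \<le> c * S" using c0 by (simp_all add: mult_left_mono)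
  qed
  have "l * (1 - c * T k) \<le> a k \<and> a k \<le> u" using \<open>K \<le> k\<close>
  proof (induction k rule: dec_induct)
    case base
    then show ?case using l u by (simp add: T_def S_def)
  next
    case (step k)
    define d where "d = (real k + 1) * (real k + 3)"
    have "c / (2 * (real K + 1)) \<le> c * S" unfolding S_def using c0 by (simp add: algebra_simps)
    then have "c / (2 * (real K + 1)) < 1" using tail unfolding S_def by linarith
    then have "c < 2 * (real K + 1)" by (simp add: divide_less_eq)
    also have "\<dots> \<le> 2 * (real k + 1)" using step.hyps(1) by simp
    also have "\<dots> \<le> (real k + 3) * (real k + 1)" by (rule mult_right_mono) auto
    also have "\<dots> = d" unfolding d_def by simp
    finally have "c \<le> d" "0 < d" using c0 by auto
    have "1 / (2 * (real k + 1)) - 1 / (2 * (real k + 3)) = 1 / d"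
      unfolding d_def by (simp add: divide_simps) (simp add: algebra_simps)
    then have "c * T (Suc k) = c * T k + c / d"
      unfolding T_def by (simp add: algebra_simps)
    moreover have "a (Suc k) = a k * (1 - 1 / d * (a k ^ 2 / (1 - a k ^ 2)))"
      using rec[OF step.hyps(1)] unfolding d_def by simp
    moreover have "c * T k < 1" using T[OF step.hyps(1)] tail unfolding S_def by linarith
    ultimately show ?case
      using stepsize_update_lower_bound[of l "c * T k" "a k" u c d] step.IH T[OF step.hyps(1)]
        l u c \<open>c \<le> d\<close> \<open>0 < d\<close>
      by auto
  qed
  moreover have "l * (1 - c * S) \<le> l * (1 - c * T k)" using T[OF \<open>K \<le> k\<close>] l by simp
  ultimately show ?thesis unfolding S_def by linarith
qed

lemma anchored_stepsize_bounds:
  fixes a :: "nat \<Rightarrow> real"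
  assumes a0: "a 0 = 618 / 1000"
    and rec: "\<And>k. a (Suc k) = a k * (1 - 1 / ((real k + 1) * (real k + 3)) * (a k ^ 2 / (1 - a k ^ 2)))"
  shows "435 / 1000 \<le> a k \<and> a k \<le> 618 / 1000"
proof -
  have enclose: "l' \<le> a m \<and> a m \<le> u'"
    if "m = Suc k" "l \<le> a k \<and> a k \<le> u" "0 < l" "u < 1" "u^2 / (1 - u^2) \<le> (real k + 1) * (real k + 3)"
      "l' \<le> l * (1 - 1 / ((real k + 1) * (real k + 3)) * (u^2 / (1 - u^2)))"
      "u * (1 - 1 / ((real k + 1) * (real k + 3)) * (l^2 / (1 - l^2))) \<le> u'"
    for m k l u l' u'
    using that stepsize_update_enclosure[of l "a k" u "(real k + 1) * (real k + 3)"] rec[of k] by auto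
  txt \<open>Enclosures of \<open>a 1, \<dots>, a 5\<close>, rounded outwards to four digits; from \<open>a 5\<close> on
    the tail bound with \<open>c = 0.26 \<ge> u\<^sup>2 / (1 - u\<^sup>2)\<close> takes over.\<close>
  have a1: "4907/10000 \<le> a 1 \<and> a 1 \<le> 4908/10000"
    by (rule enclose[where k = 0 and l = "618/1000" and u = "618/1000"]) (simp_all add: a0 power2_eq_square)
  have a2: "4712/10000 \<le> a 2 \<and> a 2 \<le> 4714/10000"
    by (rule enclose[OF _ a1]) (simp_all add: power2_eq_square)
  have a3: "4622/10000 \<le> a 3 \<and> a 3 \<le> 4625/10000"
    by (rule enclose[OF _ a2]) (simp_all add: power2_eq_square)
  have a4: "4569/10000 \<le> a 4 \<and> a 4 \<le> 4573/10000"
    by (rule enclose[OF _ a3]) (simp_all add: power2_eq_square)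
  have a5: "4534/10000 \<le> a 5 \<and> a 5 \<le> 4539/10000"
    by (rule enclose[OF _ a4]) (simp_all add: power2_eq_square)
  show ?thesis
  proof (cases "k < 5")
    case True
    then have "k \<in> {0, 1, 2, 3, 4}" by auto
    then show ?thesis using a0 a1 a2 a3 a4 by auto
  next
    case False
    then show ?thesis
      using stepsize_tail_enclosure[of 5 a "4534/10000" "4539/10000" "26/100" k] rec a5
      by (simp add: power2_eq_square)
  qed
qed

lemma anchored_potential_step:
  fixes g0 gh g1 w :: "'a::real_inner" and n \<alpha> \<alpha>' r :: real
  assumes n: "0 < n" and \<alpha>: "0 < \<alpha>" and r: "0 < r" "r < 1"
    and step: "\<alpha>' = \<alpha> * (1 - 1 / (n * (n + 2)) * (r^2 / (1 - r^2)))"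
    and mono: "0 \<le> (g1 - g0) \<bullet> (- (1 / (n + 1)) *\<^sub>R w - \<alpha> *\<^sub>R gh)"
    and lip: "norm (g1 - gh) \<le> r * norm (g0 - gh)"
  shows "\<alpha>' * (n + 1) * (n + 2) * (norm g1)^2 + 2 * (n + 1) * (g1 \<bullet> (w - (1 / (n + 1)) *\<^sub>R w - \<alpha> *\<^sub>R gh))
       \<le> \<alpha> * n * (n + 1) * (norm g0)^2 + 2 * n * (g0 \<bullet> w)"
    (is "?lhs \<le> ?rhs")
proof -
  define q where "q = 1 - r^2"
  have q: "0 < q" using r unfolding q_def by (simp add: abs_square_less_1)
  define E where "E = n * (n + 2) * q"
  have "0 < E" unfolding E_def using n q by simp
  have "\<alpha>' = \<alpha> * (1 - r^2 / E)" unfolding step E_def q_def by simp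
  then have step': "\<alpha>' * E = \<alpha> * (E - r^2)" using \<open>0 < E\<close> by (simp add: field_simps)
  define M where "M = n * (n + 1) * ((g1 - g0) \<bullet> (- (1 / (n + 1)) *\<^sub>R w - \<alpha> *\<^sub>R gh))"
  define Lg where "Lg = r^2 * (norm (g0 - gh))^2 - (norm (g1 - gh))^2"
  define S where "S = (norm ((n * q) *\<^sub>R gh + ((n + 1) * r^2 - n) *\<^sub>R g1))^2"
  have "0 \<le> M" unfolding M_def using n mono by simp
  moreover have "0 \<le> Lg" unfolding Lg_def using lip r
    by (simp add: power_mono flip: power_mult_distrib)
  moreover have "0 \<le> S" unfolding S_def by simp
  ultimately have "0 \<le> 2 * r^2 * n * q * M + \<alpha> * n^2 * (n + 1) * q * Lg + \<alpha> * (n + 1) * S"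
    using \<alpha> n q by (intro add_nonneg_nonneg mult_nonneg_nonneg) auto
  also have "\<dots> = r^2 * n * q * (?rhs - ?lhs)"
  proof -
    have M_eq: "M = n * (g0 \<bullet> w) - n * (g1 \<bullet> w) + n * (n + 1) * \<alpha> * (g0 \<bullet> gh - g1 \<bullet> gh)"
      unfolding M_def using n by (simp add: inner_diff_left inner_diff_right field_simps)
    have L_eq: "Lg = r^2 * (g0 \<bullet> g0 - 2 * (g0 \<bullet> gh) + gh \<bullet> gh) - (g1 \<bullet> g1 - 2 * (g1 \<bullet> gh) + gh \<bullet> gh)"
      unfolding Lg_def by (simp add: power2_norm_eq_inner inner_diff_left inner_diff_right inner_commute)
    have S_eq: "S = (n * q)^2 * (gh \<bullet> gh) + 2 * (n * q) * ((n + 1) * r^2 - n) * (g1 \<bullet> gh) + ((n + 1) * r^2 - n)^2 * (g1 \<bullet> g1)"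
      unfolding S_def power2_norm_eq_inner
      by (simp add: inner_add_left inner_add_right inner_commute power2_eq_square algebra_simps)
    have lhs_eq: "?lhs = \<alpha>' * (n + 1) * (n + 2) * (g1 \<bullet> g1) + 2 * n * (g1 \<bullet> w) - 2 * (n + 1) * \<alpha> * (g1 \<bullet> gh)"
      using n by (simp add: power2_norm_eq_inner inner_diff_right inner_add_right field_simps)
    have "r^2 * n * q * (?rhs - ?lhs)
        = r^2 * n * q * (\<alpha> * n * (n + 1) * (g0 \<bullet> g0) + 2 * n * (g0 \<bullet> w) - 2 * n * (g1 \<bullet> w) + 2 * (n + 1) * \<alpha> * (g1 \<bullet> gh))
          - r^2 * (n + 1) * (g1 \<bullet> g1) * (\<alpha>' * E)"
      unfolding lhs_eq E_def by (simp add: power2_norm_eq_inner algebra_simps)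
    also have "\<dots> = 2 * r^2 * n * q * M + \<alpha> * n^2 * (n + 1) * q * Lg + \<alpha> * (n + 1) * S"
      unfolding step' unfolding M_eq L_eq S_eq E_def q_def by (simp add: algebra_simps power2_eq_square)
    finally show ?thesis by simp
  qed
  finally have "0 \<le> (r^2 * n * q) * (?rhs - ?lhs)" by simp
  moreover have "0 < r^2 * n * q" using r n q by simp
  ultimately show ?thesis by (simp add: zero_le_mult_iff)
qed

lemma quadratic_rate_bound:
  fixes a n u v c K :: real
  assumes n: "0 < n" and a: "0 < a"
    and h: "a * n * (n + 1) * u^2 - 2 * n * u * v \<le> c * v^2"
    and K: "4 + 2 * c * a \<le> K * a^2"
  shows "u^2 \<le> K * v^2 / (n * (n + 1))"
proof -
  define X where "X = a^2 * n * (n + 1)^2 * u^2"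
  define Y where "Y = a * n * (n + 1) * u * v"
  have "2 * X - 4 * Y \<le> 2 * a * (n + 1) * (c * v^2)"
  proof -
    have "2 * a * (n + 1) * (a * n * (n + 1) * u^2 - 2 * n * u * v) \<le> 2 * a * (n + 1) * (c * v^2)"
      using h a n by (intro mult_left_mono) auto
    then show ?thesis unfolding X_def Y_def by (simp add: algebra_simps power2_eq_square)
  qed
  moreover have "4 * Y \<le> X + 4 * n * v^2"
  proof -
    have "0 \<le> n * (a * (n + 1) * u - 2 * v)^2" using n by simp
    then show ?thesis unfolding X_def Y_def by (simp add: algebra_simps power2_eq_square)
  qed
  moreover have "4 * n * v^2 \<le> 4 * (n + 1) * v^2" by (simp add: mult_right_mono)
  ultimately have "X \<le> 2 * a * (n + 1) * (c * v^2) + 4 * (n + 1) * v^2" by linarith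
  also have "\<dots> = (n + 1) * v^2 * (4 + 2 * c * a)" by (simp add: algebra_simps)
  also have "\<dots> \<le> (n + 1) * v^2 * (K * a^2)" using K n by (intro mult_left_mono) auto
  finally have "(a^2 * (n + 1)) * (n * (n + 1) * u^2) \<le> (a^2 * (n + 1)) * (K * v^2)"
    unfolding X_def by (simp add: algebra_simps power2_eq_square)
  then have "n * (n + 1) * u^2 \<le> K * v^2" using a n by (simp add: mult_le_cancel_left_pos)
  then show ?thesis using n by (simp add: pos_le_divide_eq mult.commute)
qed

locale anchored_extragradient =
  fixes G :: "'a::real_inner \<Rightarrow> 'a" and R :: real and \<alpha> :: "nat \<Rightarrow> real"
    and z0 :: 'a and z zh :: "nat \<Rightarrow> 'a"
  assumes R_pos: "0 < R"
    and monotone: "\<And>u v. 0 \<le> (G u - G v) \<bullet> (u - v)"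
    and lipschitz: "R-lipschitz_on UNIV G"
    and alpha_0: "\<alpha> 0 = (618 / 1000) / R"
    and alpha_Suc: "\<And>k. \<alpha> (Suc k) = \<alpha> k * (1 - 1 / ((real k + 1) * (real k + 3))
                     * (\<alpha> k ^ 2 * R ^ 2 / (1 - \<alpha> k ^ 2 * R ^ 2)))"
    and z_0: "z 0 = z0"
    and zh_eq: "\<And>k. zh k = z k + (1 / (real k + 2)) *\<^sub>R (z0 - z k) - \<alpha> k *\<^sub>R G (z k)"
    and z_Suc: "\<And>k. z (Suc k) = z k + (1 / (real k + 2)) *\<^sub>R (z0 - z k) - \<alpha> k *\<^sub>R G (zh k)"
begin

lemma scaled_stepsize_bounds: "435 / 1000 \<le> \<alpha> k * R \<and> \<alpha> k * R \<le> 618 / 1000"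
proof (rule anchored_stepsize_bounds)
  show "\<alpha> 0 * R = 618 / 1000" using alpha_0 R_pos by simp
  show "\<alpha> (Suc k) * R = \<alpha> k * R * (1 - 1 / ((real k + 1) * (real k + 3)) * ((\<alpha> k * R)^2 / (1 - (\<alpha> k * R)^2)))" for k
    unfolding alpha_Suc by (simp add: power_mult_distrib algebra_simps)
qed

lemma stepsize_pos: "0 < \<alpha> k"
proof -
  have "0 < \<alpha> k * R" using scaled_stepsize_bounds[of k] by linarith
  then show ?thesis using R_pos by (rule zero_less_mult_pos2)
qed

lemma dist_G_le: "dist (G u) (G v) \<le> R * dist u v"
  using lipschitz by (rule lipschitz_onD) simp_all

definition potential :: "nat \<Rightarrow> real" where
  "potential k = \<alpha> k * (real k + 1) * (real k + 2) * (norm (G (z k)))^2 + 2 * (real k + 1) * (G (z k) \<bullet> (z k - z0))"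

lemma potential_Suc_le: "potential (Suc k) \<le> potential k"
proof -
  define n where "n = real k + 1"
  have step: "1 / (real k + 2) = 1 / (n + 1)" unfolding n_def by simp
  have "z (Suc k) - z k = - (1 / (n + 1)) *\<^sub>R (z k - z0) - \<alpha> k *\<^sub>R G (zh k)"
    unfolding z_Suc step by (simp add: algebra_simps)
  then have mono: "0 \<le> (G (z (Suc k)) - G (z k)) \<bullet> (- (1 / (n + 1)) *\<^sub>R (z k - z0) - \<alpha> k *\<^sub>R G (zh k))"
    using monotone by metis
  have "norm (G (z (Suc k)) - G (zh k)) \<le> R * norm (z (Suc k) - zh k)"
    using dist_G_le by (simp add: dist_norm)
  also have "z (Suc k) - zh k = \<alpha> k *\<^sub>R (G (z k) - G (zh k))"
    unfolding z_Suc zh_eq by (simp add: algebra_simps)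
  finally have lip: "norm (G (z (Suc k)) - G (zh k)) \<le> (\<alpha> k * R) * norm (G (z k) - G (zh k))"
    using stepsize_pos[of k] by (simp add: mult_ac)
  have z_Suc_diff: "z (Suc k) - z0 = (z k - z0) - (1 / (n + 1)) *\<^sub>R (z k - z0) - \<alpha> k *\<^sub>R G (zh k)"
    unfolding z_Suc step by (simp add: algebra_simps)
  have "real (Suc k) + 1 = n + 1" "real (Suc k) + 2 = n + 2" unfolding n_def by simp_all
  then have "potential (Suc k) = \<alpha> (Suc k) * (n + 1) * (n + 2) * (norm (G (z (Suc k))))^2
      + 2 * (n + 1) * (G (z (Suc k)) \<bullet> ((z k - z0) - (1 / (n + 1)) *\<^sub>R (z k - z0) - \<alpha> k *\<^sub>R G (zh k)))"
    unfolding potential_def z_Suc_diff by simp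
  also have "\<dots> \<le> \<alpha> k * n * (n + 1) * (norm (G (z k)))^2 + 2 * n * (G (z k) \<bullet> (z k - z0))"
  proof (rule anchored_potential_step[OF _ stepsize_pos _ _ _ mono lip])
    show "\<alpha> (Suc k) = \<alpha> k * (1 - 1 / (n * (n + 2)) * ((\<alpha> k * R)^2 / (1 - (\<alpha> k * R)^2)))"
      unfolding alpha_Suc n_def by (simp add: power_mult_distrib add.assoc)
  qed (use scaled_stepsize_bounds[of k] n_def in auto)
  also have "\<dots> = potential k"
    unfolding potential_def n_def by (simp add: add.assoc)
  finally show ?thesis .
qed

lemma potential_le_potential_0: "potential k \<le> potential 0"
proof -
  have "decseq potential" by (rule decseq_SucI) (rule potential_Suc_le)
  then show ?thesis by (simp add: decseqD)
qed

context
  fixes zs :: 'a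
  assumes zero: "G zs = 0"
begin

lemma potential_0_le: "potential 0 \<le> 2 * (618 / 1000) * R * (norm (z0 - zs))^2"
proof -
  have "norm (G z0) \<le> R * norm (z0 - zs)"
    using dist_G_le[of z0 zs] by (simp add: zero dist_norm)
  then have "potential 0 \<le> 2 * \<alpha> 0 * (R * norm (z0 - zs))^2"
    unfolding potential_def z_0 using stepsize_pos[of 0] by (simp add: power_mono)
  also have "\<dots> = 2 * (618 / 1000) * R * (norm (z0 - zs))^2"
    unfolding alpha_0 using R_pos by (simp add: power2_eq_square)
  finally show ?thesis .
qed

lemma potential_lower_bound:
  "\<alpha> k * (real k + 1) * (real k + 2) * (norm (G (z k)))^2
     - 2 * (real k + 1) * norm (G (z k)) * norm (z0 - zs) \<le> potential k"
proof -
  have "0 \<le> G (z k) \<bullet> (z k - zs)"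
    using monotone[of "z k" zs] by (simp add: zero)
  moreover have "G (z k) \<bullet> (z0 - zs) \<le> norm (G (z k)) * norm (z0 - zs)"
    by (rule norm_cauchy_schwarz)
  moreover have "G (z k) \<bullet> (z k - z0) = G (z k) \<bullet> (z k - zs) - G (z k) \<bullet> (z0 - zs)"
    by (simp add: inner_diff_right)
  ultimately have "- (norm (G (z k)) * norm (z0 - zs)) \<le> G (z k) \<bullet> (z k - z0)" by linarith
  then have "2 * (real k + 1) * (- (norm (G (z k)) * norm (z0 - zs))) \<le> 2 * (real k + 1) * (G (z k) \<bullet> (z k - z0))"
    by (rule mult_left_mono) simp
  then show ?thesis unfolding potential_def by (simp add: mult.assoc)
qed

theorem convergence_rate:
  "(norm (G (z k)))^2 \<le> 27 * R^2 * (norm (z0 - zs))^2 / ((real k + 1) * (real k + 2))"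
proof -
  define a where "a = \<alpha> k * R"
  have "0 < a" unfolding a_def using stepsize_pos[of k] R_pos by simp
  have bound: "a * (real k + 1) * (real k + 1 + 1) * (norm (G (z k)))^2
      - 2 * (real k + 1) * norm (G (z k)) * (R * norm (z0 - zs)) \<le> 2 * (618 / 1000) * (R * norm (z0 - zs))^2"
  proof -
    have "R * (\<alpha> k * (real k + 1) * (real k + 2) * (norm (G (z k)))^2
      - 2 * (real k + 1) * norm (G (z k)) * norm (z0 - zs)) \<le> R * (2 * (618 / 1000) * R * (norm (z0 - zs))^2)"
      using potential_lower_bound[of k] potential_le_potential_0[of k] potential_0_le R_pos by simp
    then show ?thesis unfolding a_def by (simp add: algebra_simps power2_eq_square)
  qed
  have quadratic: "4 + 2 * (2 * (618 / 1000)) * a \<le> 27 * a^2"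
  proof -
    have "435 / 1000 \<le> a" using scaled_stepsize_bounds[of k] unfolding a_def by simp
    moreover from this have "435 / 1000 * a \<le> a * a" by (simp add: mult_right_mono)
    ultimately show ?thesis unfolding power2_eq_square by linarith
  qed
  have "(norm (G (z k)))^2 \<le> 27 * (R * norm (z0 - zs))^2 / ((real k + 1) * (real k + 1 + 1))"
    by (rule quadratic_rate_bound[OF _ \<open>0 < a\<close> bound quadratic]) simp
  then show ?thesis by (simp add: power_mult_distrib add.assoc)
qed

end

end

theorem corollary2:
  fixes L :: "(real ^ 'n) \<times> (real ^ 'm) \<Rightarrow> real"
    and R :: real
    and zs z0 :: "(real ^ 'n) \<times> (real ^ 'm)"
    and \<alpha> :: "nat \<Rightarrow> real"
    and z zh :: "nat \<Rightarrow> (real ^ 'n) \<times> (real ^ 'm)"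
  assumes R_pos: "R > 0"
    and smooth: "smooth_cc R L"
    and cc: "convex_concave L"
    and saddle: "is_saddle_point L zs"
    and alpha0: "\<alpha> 0 = (618 / 1000) / R"
    and alphaS: "\<And>k. \<alpha> (Suc k) = \<alpha> k * (1 - 1 / ((real k + 1) * (real k + 3))
                     * (\<alpha> k ^ 2 * R ^ 2 / (1 - \<alpha> k ^ 2 * R ^ 2)))"
    and z_0: "z 0 = z0"
    and zh_def: "\<And>k. zh k = z k + (1 / (real k + 2)) *\<^sub>R (z0 - z k) - \<alpha> k *\<^sub>R saddle_op L (z k)"
    and zS: "\<And>k. z (Suc k) = z k + (1 / (real k + 2)) *\<^sub>R (z0 - z k) - \<alpha> k *\<^sub>R saddle_op L (zh k)"
  shows "\<forall>k. norm (grad L (z k)) ^ 2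
           \<le> 27 * R ^ 2 * norm (z0 - zs) ^ 2 / ((real k + 1) * (real k + 2))"
proof
  fix k
  have diff: "\<And>z. L differentiable (at z)" and lip: "R-lipschitz_on UNIV (saddle_op L)"
    using smooth unfolding smooth_cc_def by auto
  interpret anchored_extragradient "saddle_op L" R \<alpha> z0 z zh
    using R_pos saddle_op_monotone[OF cc diff] lip alpha0 alphaS z_0 zh_def zS
    by unfold_locales auto
  show "norm (grad L (z k)) ^ 2 \<le> 27 * R ^ 2 * norm (z0 - zs) ^ 2 / ((real k + 1) * (real k + 2))"
    using convergence_rate[OF saddle_op_eq_0_at_saddle_point[OF diff saddle], of k] norm_saddle_op[OF diff]
    by simp
qed

end
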